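(* Let $p\in[1,\infty]$, and suppose either $B^p(\mathcal Z)\subseteq\underline{\mathcal Z}\subseteq\ell^p(\mathcal Z)$ or $c_0(\mathcal Z)\cap B^p(\mathcal Z)\subseteq\underline{\mathcal Z}\subseteq c_0(\mathcal Z)\cap\ell^p(\mathcal Z)$. Let $H:\underline{\mathcal Z}\to\mathcal Y$ be a linear functional with a formal convolution representation $\underline\kappa$. (i) $H$ is $p$-continuous. (ii) If $p\neq1$ and $\|\underline\kappa\|_q<\infty$, where $q\in[1,\infty)$ is the Hölder conjugate of $p$, then $H$ has the $p$-weighted FMP.
   Context: Let $(\mathcal Z,\|\cdot\|)$ and $(\mathcal Y,\|\cdot\|_{\mathcal Y})$ be normed vector spaces over $\mathbb R$ and $\mathcal B=\{z\in\mathcal Z:\|z\|\le1\}$. Let $\mathbb Z_-=\{0,-1,-2,\dots\}$; elements of $\mathcal Z^{\mathbb Z_-}$ are sequences $\underline z=(z_t)_{t\le0}$. For $t\in\mathbb Z_-$, $\delta^t:\mathcal Z\to\mathcal Z^{\mathbb Z_-}$ maps $z$ to the sequence whose entry at time $t$ is $z$ and all other entries are $0$. Standing assumption: $\underline{\mathcal Z}\subseteq\mathcal Z^{\mathbb Z_-}$ is a set such that (a) $\underline{\mathcal Z}$ is convex and $\underline{\mathcal Z}=\{-\underline z:\underline z\in\underline{\mathcal Z}\}$; (b) $\delta^t(\mathcal B)\subseteq\underline{\mathcal Z}$ for all $t\in\mathbb Z_-$; (c) for every $\underline z\in\underline{\mathcal Z}$ and every $J\subseteq\mathbb Z_-$,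 the sequence $\sum_{t\in J}\delta^t(z_t)$ (equal to $z_t$ at times $t\in J$ and $0$ elsewhere) belongs to $\underline{\mathcal Z}$. A functional $H:\underline{\mathcal Z}\to\mathcal Y$ is linear if it is the restriction of a linear map defined on the linear span of $\underline{\mathcal Z}$. $L(\mathcal Z,\mathcal Y)$ is the space of continuous linear maps $\mathcal Z\to\mathcal Y$ with operator norm $\|\cdot\|_{op}$; for $\underline\kappa\in L(\mathcal Z,\mathcal Y)^{\mathbb Z_-}$ and $q\in[1,\infty)$, $\|\underline\kappa\|_q=(\sum_{t\le0}\|\kappa_t\|_{op}^q)^{1/q}$. $H$ has a formal convolution representation $\underline\kappa\in L(\mathcal Z,\mathcal Y)^{\mathbb Z_-}$ if $H(\underline z)=\lim_{T\to-\infty}\sum_{t=T}^0\kappa_t(z_t)$ for all $\underline z\in\underline{\mathcal Z}$. For $p\in[1,\infty]$, $\ell^p(\mathcal Z)$ is the set of $\underline z$ with $\|\underline z\|_p=(\sum_{t\le0}\|z_t\|^p)^{1/p}<\infty$ (for $p=\infty$: $\sup_{t\le0}\|z_t\|<\infty$); $B^p(\mathcal Z)$ is its closed unit ball; $c_0(\mathcal Z)$ is the set of sequences with $\|z_t\|\to0$ as $t\to-\infty$. A weighting sequence is a monotone $\underline w\in(0,1]^{\mathbb Z_-}$ with $w_t\to0$ as $t\to-\infty$; $\|\underline z\|_{p,\underline w}=(\sum_{t\le0}w_t\|z_t\|^p)^{1/p}$ for $p<\infty$ and $\sup_{t\le0}w_t\|z_t\|$ for $p=\infty$. $H$ is $p$-continuous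 if $\underline{\mathcal Z}\subseteq\ell^p(\mathcal Z)$ and $H$ is continuous for the topology induced by $\|\cdot\|_p$. $H$ has the $p$-weighted FMP if $\underline{\mathcal Z}\subseteq\ell^p(\mathcal Z)$ and there is a weighting sequence $\underline w$ such that $H$ is continuous for the topology induced by $\|\cdot\|_{p,\underline w}$. *)

theory Defs
  imports "HOL-Analysis.Analysis"
begin

text \<open>Convention: a sequence indexed by the nonpositive integers t = 0,-1,-2,... is
  represented as a function nat => 'z, index n standing for time t = -n.\<close>

definition seq_span :: "(nat \<Rightarrow> 'z::real_vector) set \<Rightarrow> (nat \<Rightarrow> 'z) set" where
  "seq_span S = {x. \<exists>F c. finite F \<and> F \<subseteq> S \<and> x = (\<lambda>n. \<Sum>v\<in>F. c v *\<^sub>R v n)}"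

definition linear_functional ::
  "(nat \<Rightarrow> 'z::real_vector) set \<Rightarrow> ((nat \<Rightarrow> 'z) \<Rightarrow> 'y::real_vector) \<Rightarrow> bool" where
  "linear_functional S H \<longleftrightarrow> (\<exists>L.
     (\<forall>x\<in>seq_span S. \<forall>y\<in>seq_span S. L (\<lambda>n. x n + y n) = L x + L y) \<and>
     (\<forall>c. \<forall>x\<in>seq_span S. L (\<lambda>n. c *\<^sub>R x n) = c *\<^sub>R L x) \<and>
     (\<forall>z\<in>S. H z = L z))"

definition formal_conv_rep ::
  "(nat \<Rightarrow> 'z::real_normed_vector) set \<Rightarrow> ((nat \<Rightarrow> 'z) \<Rightarrow> 'y::real_normed_vector)
     \<Rightarrow> (nat \<Rightarrow> ('z \<Rightarrow>\<^sub>L 'y)) \<Rightarrow> bool" where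
  "formal_conv_rep S H \<kappa> \<longleftrightarrow>
     (\<forall>z\<in>S. (\<lambda>N. \<Sum>n\<le>N. blinfun_apply (\<kappa> n) (z n)) \<longlonglongrightarrow> H z)"

definition in_lp :: "ereal \<Rightarrow> (nat \<Rightarrow> 'z::real_normed_vector) \<Rightarrow> bool" where
  "in_lp p z \<longleftrightarrow> (if p = \<infinity> then bdd_above (range (\<lambda>n. norm (z n)))
                   else summable (\<lambda>n. norm (z n) powr real_of_ereal p))"

definition lp_norm :: "ereal \<Rightarrow> (nat \<Rightarrow> 'z::real_normed_vector) \<Rightarrow> real" where
  "lp_norm p z = (if p = \<infinity> then (SUP n. norm (z n))
                  else (\<Sum>n. norm (z n) powr real_of_ereal p) powr (1 / real_of_ereal p))"

definition lp_ball :: "ereal \<Rightarrow> (nat \<Rightarrow> 'z::real_normed_vector) set" where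
  "lp_ball p = {z. in_lp p z \<and> lp_norm p z \<le> 1}"

definition c0_seq :: "(nat \<Rightarrow> 'z::real_normed_vector) set" where
  "c0_seq = {z. (\<lambda>n. norm (z n)) \<longlonglongrightarrow> 0}"

definition weighting_seq :: "(nat \<Rightarrow> real) \<Rightarrow> bool" where
  "weighting_seq w \<longleftrightarrow> (\<forall>n. 0 < w n \<and> w n \<le> 1) \<and> decseq w \<and> w \<longlonglongrightarrow> 0"

definition weighted_norm :: "ereal \<Rightarrow> (nat \<Rightarrow> real) \<Rightarrow> (nat \<Rightarrow> 'z::real_normed_vector) \<Rightarrow> real" where
  "weighted_norm p w z = (if p = \<infinity> then (SUP n. w n * norm (z n))
                  else (\<Sum>n. w n * norm (z n) powr real_of_ereal p) powr (1 / real_of_ereal p))"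

definition continuous_wrt ::
  "((nat \<Rightarrow> 'z::real_normed_vector) \<Rightarrow> real) \<Rightarrow> (nat \<Rightarrow> 'z) set \<Rightarrow> ((nat \<Rightarrow> 'z) \<Rightarrow> 'y::real_normed_vector) \<Rightarrow> bool" where
  "continuous_wrt N S H \<longleftrightarrow>
     (\<forall>x\<in>S. \<forall>e>0. \<exists>d>0. \<forall>y\<in>S. N (\<lambda>n. y n - x n) < d \<longrightarrow> dist (H y) (H x) < e)"

definition p_continuous :: "ereal \<Rightarrow> (nat \<Rightarrow> 'z::real_normed_vector) set \<Rightarrow> ((nat \<Rightarrow> 'z) \<Rightarrow> 'y::real_normed_vector) \<Rightarrow> bool" where
  "p_continuous p S H \<longleftrightarrow> S \<subseteq> {z. in_lp p z} \<and> continuous_wrt (lp_norm p) S H"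

definition p_weighted_FMP :: "ereal \<Rightarrow> (nat \<Rightarrow> 'z::real_normed_vector) set \<Rightarrow> ((nat \<Rightarrow> 'z) \<Rightarrow> 'y::real_normed_vector) \<Rightarrow> bool" where
  "p_weighted_FMP p S H \<longleftrightarrow> S \<subseteq> {z. in_lp p z} \<and>
     (\<exists>w. weighting_seq w \<and> continuous_wrt (weighted_norm p w) S H)"

definition holder_conj :: "ereal \<Rightarrow> real" where
  "holder_conj p = (if p = \<infinity> then 1 else real_of_ereal p / (real_of_ereal p - 1))"

definition seq_convex :: "(nat \<Rightarrow> 'z::real_vector) set \<Rightarrow> bool" where
  "seq_convex S \<longleftrightarrow> (\<forall>x\<in>S. \<forall>y\<in>S. \<forall>u::real. 0 \<le> u \<and> u \<le> 1 \<longrightarrow>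
      (\<lambda>n. u *\<^sub>R x n + (1 - u) *\<^sub>R y n) \<in> S)"

definition admissible_inputs :: "(nat \<Rightarrow> 'z::real_normed_vector) set \<Rightarrow> bool" where
  "admissible_inputs S \<longleftrightarrow>
     seq_convex S \<and> S = (\<lambda>z. \<lambda>n. - z n) ` S \<and>
     (\<forall>t. \<forall>z. norm z \<le> 1 \<longrightarrow> (\<lambda>n. if n = t then z else 0) \<in> S) \<and>
     (\<forall>z\<in>S. \<forall>J. (\<lambda>n. if n \<in> J then z n else 0) \<in> S)"

end

theory Submission
  imports Defs
begin

text \<open>
  A gliding hump argument,
  a hand-made uniform boundedness principle, shows that H is bounded on the unit ball: otherwise there are humps \<open>\<zeta> k\<close> in the ball and disjoint blocks of
  indices on which the convolution sum of \<open>\<zeta> k\<close> exceeds \<open>2^(k+1)\<close>, and gluing the blocks of the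
  humps scaled by \<open>2^-(k+1)\<close> gives an input in \<open>c0 \<inter> B^p\<close> whose convolution series diverges.
  As the representation makes H homogeneous along differences of inputs, boundedness on the
  ball is a Lipschitz bound for the l^p norm.

  (ii) If \<open>\<Sum> \<parallel>\<kappa> n\<parallel>^q < \<infinity>\<close>, there is a weighting sequence s decaying so slowly that
  \<open>\<Sum> \<parallel>\<kappa> n\<parallel>^q / sqrt (s n)\<close> still converges, and Hoelder's inequality with the weights
  \<open>w = s^(p/(2q))\<close> gives a Lipschitz bound for the weighted norm.
\<close>

section \<open>Sequences in l^p\<close>

lemma ereal_ge_one_cases:
  assumes "1 \<le> (p::ereal)"
  obtains "p = \<infinity>" | P where "p = ereal P" "1 \<le> P"
  using assms by (cases p) auto

lemma norm_le_lp_norm: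
  assumes "1 \<le> p" and "in_lp p z"
  shows "norm (z n) \<le> lp_norm p z"
  using assms(1)
proof (cases rule: ereal_ge_one_cases)
  case 1
  then show ?thesis using assms(2) by (auto simp: in_lp_def lp_norm_def intro!: cSUP_upper)
next
  case (2 P)
  have "summable (\<lambda>n. norm (z n) powr P)" using assms(2) 2 by (simp add: in_lp_def)
  then have "(\<Sum>i\<in>{n}. norm (z i) powr P) \<le> (\<Sum>n. norm (z n) powr P)"
    by (rule sum_le_suminf) auto
  then have "norm (z n) powr P \<le> (\<Sum>n. norm (z n) powr P)" by simp
  then have "(norm (z n) powr P) powr (1/P) \<le> (\<Sum>n. norm (z n) powr P) powr (1/P)"
    using 2 by (intro powr_mono2) auto
  then show ?thesis using 2 by (simp add: lp_norm_def powr_powr)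
qed

lemma lp_norm_nonneg: "1 \<le> p \<Longrightarrow> in_lp p z \<Longrightarrow> 0 \<le> lp_norm p z"
  using norm_le_lp_norm[of p z 0] norm_ge_zero order_trans by blast

lemma norm_le_one_if_lp_ball: "1 \<le> p \<Longrightarrow> z \<in> lp_ball p \<Longrightarrow> norm (z n) \<le> 1"
  using norm_le_lp_norm[of p z n] by (auto simp: lp_ball_def)

lemma in_lp_diff:
  assumes p: "1 \<le> p" and x: "in_lp p x" and y: "in_lp p y"
  shows "in_lp p (\<lambda>n. y n - x n)"
  using p
proof (cases rule: ereal_ge_one_cases)
  case 1
  have "norm (y n - x n) \<le> lp_norm p y + lp_norm p x" for n
    using norm_le_lp_norm[OF p x, of n] norm_le_lp_norm[OF p y, of n] norm_triangle_ineq4[of "y n" "x n"]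
    by linarith
  then show ?thesis using 1 by (auto simp: in_lp_def bdd_above_def)
next
  case (2 P)
  have x_sum: "summable (\<lambda>n. norm (x n) powr P)" and y_sum: "summable (\<lambda>n. norm (y n) powr P)"
    using x y 2 by (simp_all add: in_lp_def)
  have bound: "norm (norm (y n - x n) powr P) \<le> 2 powr P * (norm (y n) powr P + norm (x n) powr P)" for n
  proof -
    let ?m = "max (norm (y n)) (norm (x n))"
    have "norm (y n - x n) \<le> 2 * ?m"
      using norm_triangle_ineq4[of "y n" "x n"] by linarith
    then have "norm (y n - x n) powr P \<le> (2 * ?m) powr P"
      using 2 by (intro powr_mono2) auto
    also have "\<dots> = 2 powr P * ?m powr P" by (simp add: powr_mult)
    also have "?m powr P \<le> norm (y n) powr P + norm (x n) powr P"
      by (cases "norm (y n) \<le> norm (x n)") (auto simp: max_def)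
    finally show ?thesis by simp
  qed
  have "summable (\<lambda>n. norm (y n - x n) powr P)"
    by (rule summable_comparison_test'[OF _ bound]) (intro summable_mult summable_add x_sum y_sum)
  then show ?thesis using 2 by (simp add: in_lp_def)
qed

lemma lp_norm_ereal_powr:
  assumes "0 < P" and "in_lp (ereal P) z"
  shows "lp_norm (ereal P) z powr P = (\<Sum>n. norm (z n) powr P)"
proof -
  have "0 \<le> (\<Sum>n. norm (z n) powr P)"
    using assms(2) by (intro suminf_nonneg) (auto simp: in_lp_def)
  then show ?thesis using assms(1) by (simp add: lp_norm_def powr_powr)
qed

lemma lp_ball_infinity_iff: "z \<in> lp_ball \<infinity> \<longleftrightarrow> (\<forall>n. norm (z n) \<le> 1)"
proof
  assume "\<forall>n. norm (z n) \<le> 1"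
  then show "z \<in> lp_ball \<infinity>"
    by (auto simp: lp_ball_def in_lp_def lp_norm_def bdd_above_def intro!: cSUP_least)
qed (use norm_le_one_if_lp_ball[of \<infinity> z] in auto)

lemma lp_ball_ereal_iff:
  assumes "0 < P"
  shows "z \<in> lp_ball (ereal P) \<longleftrightarrow> (\<forall>N. (\<Sum>n\<le>N. norm (z n) powr P) \<le> 1)"
proof
  assume z: "z \<in> lp_ball (ereal P)"
  then have sum: "summable (\<lambda>n. norm (z n) powr P)" by (simp add: lp_ball_def in_lp_def)
  have "lp_norm (ereal P) z powr P \<le> 1"
    using z assms by (intro powr_le1) (auto simp: lp_ball_def lp_norm_def)
  then have total: "(\<Sum>n. norm (z n) powr P) \<le> 1"
    using z assms by (simp add: lp_ball_def lp_norm_ereal_powr)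
  show "\<forall>N. (\<Sum>n\<le>N. norm (z n) powr P) \<le> 1"
  proof
    fix N
    have "(\<Sum>n\<le>N. norm (z n) powr P) \<le> (\<Sum>n. norm (z n) powr P)"
      by (rule sum_le_suminf[OF sum]) auto
    with total show "(\<Sum>n\<le>N. norm (z n) powr P) \<le> 1" by linarith
  qed
next
  assume partial: "\<forall>N. (\<Sum>n\<le>N. norm (z n) powr P) \<le> 1"
  have sum: "summable (\<lambda>n. norm (z n) powr P)"
    by (rule bounded_imp_summable) (use partial in auto)
  have "(\<Sum>n. norm (z n) powr P) \<le> 1"
  proof (rule suminf_le_const[OF sum])
    show "(\<Sum>n<N. norm (z n) powr P) \<le> 1" for N
      using partial[rule_format, of N] sum_mono2[of "{..N}" "{..<N}" "\<lambda>n. norm (z n) powr P"]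
      by fastforce
  qed
  moreover have "0 \<le> (\<Sum>n. norm (z n) powr P)" using sum by (rule suminf_nonneg) auto
  ultimately have "(\<Sum>n. norm (z n) powr P) powr (1/P) \<le> 1"
    using assms by (intro powr_le1) auto
  then show "z \<in> lp_ball (ereal P)"
    using sum by (simp add: lp_ball_def in_lp_def lp_norm_def)
qed

lemma normalized_in_lp_ball:
  assumes p: "1 \<le> p" and u: "in_lp p u" and r: "0 < lp_norm p u"
  shows "(\<lambda>n. (1 / lp_norm p u) *\<^sub>R u n) \<in> lp_ball p"
  using p
proof (cases rule: ereal_ge_one_cases)
  case 1
  then show ?thesis
    using norm_le_lp_norm[OF p u] r by (simp add: lp_ball_infinity_iff divide_le_eq_1)
next
  case (2 P)
  let ?r = "lp_norm p u"
  have sum: "summable (\<lambda>n. norm (u n) powr P)" using u 2 by (simp add: in_lp_def)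
  have "(\<Sum>n\<le>N. norm ((1 / ?r) *\<^sub>R u n) powr P) \<le> 1" for N
  proof -
    have "(\<Sum>n\<le>N. norm ((1 / ?r) *\<^sub>R u n) powr P) = (\<Sum>n\<le>N. norm (u n) powr P) / ?r powr P"
      using r by (simp add: powr_divide sum_divide_distrib)
    also have "\<dots> \<le> (\<Sum>n. norm (u n) powr P) / ?r powr P"
      using r by (intro divide_right_mono sum_le_suminf[OF sum]) auto
    also have "\<dots> = 1"
    proof -
      have "?r powr P = (\<Sum>n. norm (u n) powr P)" using 2 u by (simp add: lp_norm_ereal_powr)
      moreover have "0 < ?r powr P" using r by simp
      ultimately show ?thesis by simp
    qed
    finally show ?thesis .
  qed
  then show ?thesis using 2 by (simp add: lp_ball_ereal_iff)
qed

lemma c0_seq_scaleR_diff: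
  assumes "x \<in> c0_seq" and "y \<in> c0_seq"
  shows "(\<lambda>n. c *\<^sub>R (y n - x n)) \<in> c0_seq"
proof -
  have "(\<lambda>n. c *\<^sub>R (y n - x n)) \<longlonglongrightarrow> c *\<^sub>R (0 - 0)"
    using assms by (intro tendsto_intros) (auto simp: c0_seq_def tendsto_norm_zero_iff)
  then show ?thesis by (simp add: c0_seq_def tendsto_norm_zero_iff)
qed

section \<open>Partial convolution sums\<close>

definition conv_sum ::
  "(nat \<Rightarrow> ('z::real_normed_vector \<Rightarrow>\<^sub>L 'y::real_normed_vector)) \<Rightarrow> (nat \<Rightarrow> 'z) \<Rightarrow> nat \<Rightarrow> 'y" where
  "conv_sum \<kappa> z N = (\<Sum>n\<le>N. blinfun_apply (\<kappa> n) (z n))"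

lemma formal_conv_rep_iff: "formal_conv_rep S H \<kappa> \<longleftrightarrow> (\<forall>z\<in>S. conv_sum \<kappa> z \<longlonglongrightarrow> H z)"
  by (simp add: formal_conv_rep_def conv_sum_def[abs_def])

lemma conv_sum_diff: "conv_sum \<kappa> (\<lambda>n. y n - x n) N = conv_sum \<kappa> y N - conv_sum \<kappa> x N"
  by (simp add: conv_sum_def sum_subtractf blinfun.diff_right)

lemma conv_sum_scaleR: "conv_sum \<kappa> (\<lambda>n. c *\<^sub>R z n) N = c *\<^sub>R conv_sum \<kappa> z N"
  by (simp add: conv_sum_def scaleR_sum_right blinfun.scaleR_right)

lemma norm_conv_sum_le: "norm (conv_sum \<kappa> z N) \<le> (\<Sum>n\<le>N. norm (\<kappa> n) * norm (z n))"
  unfolding conv_sum_def by (rule order_trans[OF norm_sum sum_mono]) (rule norm_blinfun)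

lemma conv_sum_block:
  assumes "M \<le> N"
  shows "conv_sum \<kappa> z N - conv_sum \<kappa> z M = (\<Sum>n\<in>{M<..N}. blinfun_apply (\<kappa> n) (z n))"
proof -
  have "{..N} = {..M} \<union> {M<..N}" "{..M} \<inter> {M<..N} = {}" using assms by auto
  then show ?thesis by (simp add: conv_sum_def sum.union_disjoint)
qed

lemma formal_conv_rep_diff:
  assumes "formal_conv_rep S H \<kappa>" and "x \<in> S" and "y \<in> S"
  shows "conv_sum \<kappa> (\<lambda>n. y n - x n) \<longlonglongrightarrow> H y - H x"
  unfolding conv_sum_diff using assms by (intro tendsto_diff) (auto simp: formal_conv_rep_iff)

lemma formal_conv_rep_scaleR_diff:
  assumes rep: "formal_conv_rep S H \<kappa>" and x: "x \<in> S" and y: "y \<in> S"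
    and "(\<lambda>n. c *\<^sub>R (y n - x n)) \<in> S"
  shows "H (\<lambda>n. c *\<^sub>R (y n - x n)) = c *\<^sub>R (H y - H x)"
proof (rule LIMSEQ_unique)
  show "conv_sum \<kappa> (\<lambda>n. c *\<^sub>R (y n - x n)) \<longlonglongrightarrow> H (\<lambda>n. c *\<^sub>R (y n - x n))"
    using rep assms(4) by (simp add: formal_conv_rep_iff)
  show "conv_sum \<kappa> (\<lambda>n. c *\<^sub>R (y n - x n)) \<longlonglongrightarrow> c *\<^sub>R (H y - H x)"
    unfolding conv_sum_scaleR by (intro tendsto_scaleR tendsto_const formal_conv_rep_diff[OF rep x y])
qed

lemma formal_conv_rep_norm_diff_le:
  assumes rep: "formal_conv_rep S H \<kappa>" and x: "x \<in> S" and y: "y \<in> S"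
    and "\<And>N. (\<Sum>n\<le>N. norm (\<kappa> n) * norm (y n - x n)) \<le> B"
  shows "norm (H y - H x) \<le> B"
proof (rule LIMSEQ_le_const2)
  show "(\<lambda>N. norm (conv_sum \<kappa> (\<lambda>n. y n - x n) N)) \<longlonglongrightarrow> norm (H y - H x)"
    by (intro tendsto_norm formal_conv_rep_diff[OF rep x y])
  show "\<exists>N0. \<forall>N\<ge>N0. norm (conv_sum \<kappa> (\<lambda>n. y n - x n) N) \<le> B"
    using order_trans[OF norm_conv_sum_le assms(4)] by blast
qed

section \<open>The gliding hump\<close>

definition block_index :: "(nat \<Rightarrow> nat) \<Rightarrow> nat \<Rightarrow> nat" where
  "block_index N n = (LEAST k. n \<le> N (Suc k))"

lemma le_block_index:
  assumes N: "strict_mono N" and "N k < n"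
  shows "k \<le> block_index N n"
proof (rule ccontr)
  assume "\<not> k \<le> block_index N n"
  then have "N (Suc (block_index N n)) \<le> N k" using strict_mono_leD[OF N] by simp
  moreover have "n \<le> N (Suc (block_index N n))"
    unfolding block_index_def by (rule LeastI[of _ n]) (use seq_suble[OF N, of "Suc n"] in simp)
  ultimately show False using assms(2) by simp
qed

lemma block_index_eq:
  assumes "strict_mono N" and "N k < n" and "n \<le> N (Suc k)"
  shows "block_index N n = k"
  using le_block_index[OF assms(1,2)] Least_le[of "\<lambda>j. n \<le> N (Suc j)" k] assms(3)
  by (simp add: block_index_def)

lemma filterlim_block_index:
  assumes "strict_mono N"
  shows "filterlim (block_index N) at_top sequentially"
  unfolding filterlim_at_top eventually_sequentially
  using le_block_index[OF assms] by (metis Suc_le_eq)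

definition glued_blocks ::
  "(nat \<Rightarrow> nat) \<Rightarrow> (nat \<Rightarrow> real) \<Rightarrow> (nat \<Rightarrow> nat \<Rightarrow> 'z::real_vector) \<Rightarrow> nat \<Rightarrow> 'z" where
  "glued_blocks N c \<zeta> n = c (block_index N n) *\<^sub>R \<zeta> (block_index N n) n"

lemma glued_blocks_in_c0_seq:
  fixes \<zeta> :: "nat \<Rightarrow> nat \<Rightarrow> 'z::real_normed_vector"
  assumes N: "strict_mono N" and c: "c \<longlonglongrightarrow> 0" and \<zeta>: "\<And>k n. norm (\<zeta> k n) \<le> 1"
  shows "glued_blocks N c \<zeta> \<in> c0_seq"
proof -
  have lim: "(\<lambda>n. norm (c (block_index N n))) \<longlonglongrightarrow> 0"
    by (rule tendsto_norm_zero[OF filterlim_compose[OF c filterlim_block_index[OF N]]])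
  have "norm (norm (glued_blocks N c \<zeta> n)) \<le> norm (c (block_index N n))" for n
    using \<zeta>[of "block_index N n" n] by (simp add: glued_blocks_def mult_left_le)
  then have "(\<lambda>n. norm (glued_blocks N c \<zeta> n)) \<longlonglongrightarrow> 0"
    by (intro Lim_null_comparison[OF always_eventually lim]) simp
  then show ?thesis by (simp add: c0_seq_def)
qed

lemma conv_sum_glued_blocks:
  assumes N: "strict_mono N"
  shows "conv_sum \<kappa> (glued_blocks N c \<zeta>) (N (Suc k)) - conv_sum \<kappa> (glued_blocks N c \<zeta>) (N k)
    = c k *\<^sub>R (conv_sum \<kappa> (\<zeta> k) (N (Suc k)) - conv_sum \<kappa> (\<zeta> k) (N k))"
proof -
  have le: "N k \<le> N (Suc k)" using strict_mono_leD[OF N] by simp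
  have "(\<Sum>n\<in>{N k<..N (Suc k)}. blinfun_apply (\<kappa> n) (glued_blocks N c \<zeta> n))
      = (\<Sum>n\<in>{N k<..N (Suc k)}. c k *\<^sub>R blinfun_apply (\<kappa> n) (\<zeta> k n))"
    by (rule sum.cong) (auto simp: glued_blocks_def block_index_eq[OF N] blinfun.scaleR_right)
  then show ?thesis
    by (simp add: conv_sum_block[OF le] scaleR_sum_right)
qed

lemma scaled_selection_in_lp_ball:
  fixes \<zeta> :: "nat \<Rightarrow> nat \<Rightarrow> 'z::real_normed_vector"
  assumes p: "1 \<le> p" and \<zeta>: "\<And>k. \<zeta> k \<in> lp_ball p"
    and c: "\<And>k. 0 < c k" "\<And>k. c k \<le> 1" "summable c" "suminf c \<le> 1"
  shows "(\<lambda>n. c (j n) *\<^sub>R \<zeta> (j n) n) \<in> lp_ball p"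
  using p
proof (cases rule: ereal_ge_one_cases)
  case 1
  have "norm (c (j n) *\<^sub>R \<zeta> (j n) n) \<le> 1" for n
    using c(1,2)[of "j n"] norm_le_one_if_lp_ball[OF p \<zeta>, of "j n" n]
    by (simp add: mult_le_one less_imp_le)
  then show ?thesis using 1 by (simp add: lp_ball_infinity_iff)
next
  case (2 P)
  have "(\<Sum>n\<le>M. norm (c (j n) *\<^sub>R \<zeta> (j n) n) powr P) \<le> 1" for M
  proof -
    let ?F = "j ` {..M}"
    have "(\<Sum>n\<le>M. norm (c (j n) *\<^sub>R \<zeta> (j n) n) powr P)
        \<le> (\<Sum>n\<le>M. \<Sum>k\<in>?F. c k * norm (\<zeta> k n) powr P)"
    proof (rule sum_mono)
      fix n assume n: "n \<in> {..M}"
      have "norm (c (j n) *\<^sub>R \<zeta> (j n) n) powr P = c (j n) powr P * norm (\<zeta> (j n) n) powr P"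
        using c(1)[of "j n"] by (simp add: powr_mult)
      also have "\<dots> \<le> c (j n) * norm (\<zeta> (j n) n) powr P"
        using powr_le_one_le[OF c(1,2)] 2 by (intro mult_right_mono) auto
      also have "\<dots> \<le> (\<Sum>k\<in>?F. c k * norm (\<zeta> k n) powr P)"
        using n c(1) by (intro member_le_sum) (auto intro!: mult_nonneg_nonneg simp: less_imp_le)
      finally show "norm (c (j n) *\<^sub>R \<zeta> (j n) n) powr P \<le> (\<Sum>k\<in>?F. c k * norm (\<zeta> k n) powr P)" .
    qed
    also have "\<dots> = (\<Sum>k\<in>?F. c k * (\<Sum>n\<le>M. norm (\<zeta> k n) powr P))"
      by (simp add: sum.swap[of _ "{..M}"] sum_distrib_left)
    also have "\<dots> \<le> (\<Sum>k\<in>?F. c k)"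
      using \<zeta> 2 c(1) by (intro sum_mono mult_right_le_one_le) (auto simp: lp_ball_ereal_iff less_imp_le intro!: sum_nonneg)
    also have "\<dots> \<le> suminf c"
      using c(1) by (intro sum_le_suminf c(3)) (auto intro: less_imp_le)
    finally show ?thesis using c(4) by linarith
  qed
  then show ?thesis using 2 by (simp add: lp_ball_ereal_iff)
qed

lemma conv_sum_large_increment:
  assumes p: "1 \<le> p" and rep: "formal_conv_rep S H \<kappa>"
    and unbounded: "\<And>C. \<exists>z\<in>S \<inter> lp_ball p. C < norm (H z)"
  shows "\<exists>z\<in>lp_ball p. \<exists>N>M. B < norm (conv_sum \<kappa> z N - conv_sum \<kappa> z M)"
proof -
  obtain z where z: "z \<in> S" "z \<in> lp_ball p" and big: "B + (\<Sum>n\<le>M. norm (\<kappa> n)) < norm (H z)"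
    using unbounded by blast
  have "norm (conv_sum \<kappa> z M) \<le> (\<Sum>n\<le>M. norm (\<kappa> n) * norm (z n))"
    by (rule norm_conv_sum_le)
  also have "\<dots> \<le> (\<Sum>n\<le>M. norm (\<kappa> n))"
    using norm_le_one_if_lp_ball[OF p z(2)] by (intro sum_mono mult_right_le_one_le) auto
  finally have gap: "B < norm (H z - conv_sum \<kappa> z M)"
    using big norm_triangle_ineq2[of "H z" "conv_sum \<kappa> z M"] by linarith
  have "(\<lambda>N. norm (conv_sum \<kappa> z N - conv_sum \<kappa> z M)) \<longlonglongrightarrow> norm (H z - conv_sum \<kappa> z M)"
    using rep z(1) by (intro tendsto_norm tendsto_diff tendsto_const) (simp add: formal_conv_rep_iff)
  from order_tendstoD(1)[OF this gap] obtain N0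
    where "\<And>N. N \<ge> N0 \<Longrightarrow> B < norm (conv_sum \<kappa> z N - conv_sum \<kappa> z M)"
    by (auto simp: eventually_sequentially)
  then show ?thesis using z(2) by (intro bexI[of _ z] exI[of _ "N0 + Suc M"]) auto
qed

lemma hump_sequence:
  assumes increment: "\<And>M B. \<exists>z\<in>lp_ball p. \<exists>N>M. B < norm (conv_sum \<kappa> z N - conv_sum \<kappa> z M)"
  obtains N \<zeta> where "strict_mono N" and "\<And>k. \<zeta> k \<in> lp_ball p"
    and "\<And>k. B k < norm (conv_sum \<kappa> (\<zeta> k) (N (Suc k)) - conv_sum \<kappa> (\<zeta> k) (N k))"
proof -
  obtain \<zeta>' N' where hump: "\<And>M B. \<zeta>' M B \<in> lp_ball p \<and> M < N' M B \<and>
      B < norm (conv_sum \<kappa> (\<zeta>' M B) (N' M B) - conv_sum \<kappa> (\<zeta>' M B) M)"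
    using increment by metis
  define N where "N = rec_nat 0 (\<lambda>k m. N' m (B k))"
  have N_Suc: "N (Suc k) = N' (N k) (B k)" for k by (simp add: N_def)
  show ?thesis
  proof (rule that[of N "\<lambda>k. \<zeta>' (N k) (B k)"])
    show "strict_mono N" unfolding strict_mono_Suc_iff using hump by (simp add: N_Suc)
  qed (use hump in \<open>simp_all add: N_Suc\<close>)
qed

lemma formal_conv_rep_bounded_on_lp_ball:
  assumes p: "1 \<le> p" and ball: "c0_seq \<inter> lp_ball p \<subseteq> S" and rep: "formal_conv_rep S H \<kappa>"
  shows "\<exists>C\<ge>0. \<forall>z\<in>S \<inter> lp_ball p. norm (H z) \<le> C"
proof (rule ccontr)
  assume "\<not> ?thesis"
  then have "\<not> (\<forall>z\<in>S \<inter> lp_ball p. norm (H z) \<le> max C 0)" for C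
    using max.cobounded2[of 0 C] by blast
  then have "\<exists>z\<in>S \<inter> lp_ball p. C < norm (H z)" for C
    by (force simp: not_le)
  then obtain N \<zeta> where N: "strict_mono N" and \<zeta>_ball: "\<And>k. \<zeta> k \<in> lp_ball p"
    and hump: "\<And>k. 2 ^ Suc k < norm (conv_sum \<kappa> (\<zeta> k) (N (Suc k)) - conv_sum \<kappa> (\<zeta> k) (N k))"
    using hump_sequence[of p \<kappa> "\<lambda>k. 2 ^ Suc k"] conv_sum_large_increment[OF p rep] by metis
  define c where "c k = (1/2::real) ^ Suc k" for k
  have c_pos: "0 < c k" and c_le_1: "c k \<le> 1" for k
    unfolding c_def by (simp, rule power_le_one) auto
  have c_sum: "summable c" "suminf c \<le> 1"
    using power_half_series by (simp_all add: c_def[abs_def] sums_iff)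
  have c_lim: "c \<longlonglongrightarrow> 0"
    unfolding c_def[abs_def] by (rule LIMSEQ_Suc[OF LIMSEQ_power_zero]) simp
  define Z where "Z = glued_blocks N c \<zeta>"
  have "Z \<in> c0_seq"
    unfolding Z_def by (rule glued_blocks_in_c0_seq[OF N c_lim]) (rule norm_le_one_if_lp_ball[OF p \<zeta>_ball])
  moreover have "Z \<in> lp_ball p"
    unfolding Z_def glued_blocks_def
    by (rule scaled_selection_in_lp_ball[OF p \<zeta>_ball c_pos c_le_1 c_sum])
  ultimately have "conv_sum \<kappa> Z \<longlonglongrightarrow> H Z" using ball rep by (auto simp: formal_conv_rep_iff)
  then have "(\<lambda>k. conv_sum \<kappa> Z (N (Suc k)) - conv_sum \<kappa> Z (N k)) \<longlonglongrightarrow> H Z - H Z"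
    using LIMSEQ_subseq_LIMSEQ[OF _ N] by (intro tendsto_diff LIMSEQ_Suc) (auto simp: o_def)
  then obtain k where "norm (conv_sum \<kappa> Z (N (Suc k)) - conv_sum \<kappa> Z (N k)) < 1"
    using LIMSEQ_D[of _ 0 1] by auto
  moreover have "norm (conv_sum \<kappa> Z (N (Suc k)) - conv_sum \<kappa> Z (N k))
      = c k * norm (conv_sum \<kappa> (\<zeta> k) (N (Suc k)) - conv_sum \<kappa> (\<zeta> k) (N k))"
    using c_pos[of k] by (simp add: Z_def conv_sum_glued_blocks[OF N])
  moreover have "c k * 2 ^ Suc k < c k * norm (conv_sum \<kappa> (\<zeta> k) (N (Suc k)) - conv_sum \<kappa> (\<zeta> k) (N k))"
    by (rule mult_strict_left_mono[OF hump c_pos])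
  moreover have "c k * 2 ^ Suc k = 1"
    by (simp add: c_def power_mult_distrib[symmetric])
  ultimately show False by linarith
qed

section \<open>Continuity for the l^p norm\<close>

lemma continuous_wrt_if_Lipschitz:
  assumes "0 \<le> C" and "\<And>x y. x \<in> S \<Longrightarrow> y \<in> S \<Longrightarrow> dist (H y) (H x) \<le> C * N (\<lambda>n. y n - x n)"
  shows "continuous_wrt N S H"
  unfolding continuous_wrt_def
proof (intro ballI allI impI)
  fix x e assume x: "x \<in> S" and e: "(0::real) < e"
  show "\<exists>d>0. \<forall>y\<in>S. N (\<lambda>n. y n - x n) < d \<longrightarrow> dist (H y) (H x) < e"
  proof (intro exI[of _ "e / (C + 1)"] conjI ballI impI)
    fix y assume y: "y \<in> S" and "N (\<lambda>n. y n - x n) < e / (C + 1)"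
    then have "C * N (\<lambda>n. y n - x n) \<le> C * (e / (C + 1))"
      using assms(1) by (intro mult_left_mono) auto
    then have "dist (H y) (H x) \<le> C * (e / (C + 1))"
      using assms(2)[OF x y] by linarith
    also have "\<dots> < e" using assms(1) e by (simp add: field_simps)
    finally show "dist (H y) (H x) < e" .
  qed (use assms(1) e in simp)
qed

lemma lp_Lipschitz_if_bounded_on_lp_ball:
  assumes p: "1 \<le> p" and rep: "formal_conv_rep S H \<kappa>" and S: "S \<subseteq> {z. in_lp p z}"
    and C: "\<forall>z\<in>S \<inter> lp_ball p. norm (H z) \<le> C"
    and normalized: "\<forall>x\<in>S. \<forall>y\<in>S. 0 < lp_norm p (\<lambda>n. y n - x n) \<longrightarrow>
      (\<lambda>n. (1 / lp_norm p (\<lambda>n. y n - x n)) *\<^sub>R (y n - x n)) \<in> S"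
    and x: "x \<in> S" and y: "y \<in> S"
  shows "norm (H y - H x) \<le> C * lp_norm p (\<lambda>n. y n - x n)"
proof -
  let ?r = "lp_norm p (\<lambda>n. y n - x n)"
  have u: "in_lp p (\<lambda>n. y n - x n)" using in_lp_diff[OF p] x y S by auto
  consider "?r = 0" | "0 < ?r" using lp_norm_nonneg[OF p u] by linarith
  then show ?thesis
  proof cases
    case 1
    then have "y = x" using norm_le_lp_norm[OF p u] by fastforce
    then show ?thesis using 1 by simp
  next
    case 2
    let ?v = "\<lambda>n. (1 / ?r) *\<^sub>R (y n - x n)"
    have "?v \<in> S \<inter> lp_ball p" using normalized x y 2 normalized_in_lp_ball[OF p u 2] by simp
    then have "norm (H ?v) \<le> C" using C by blast
    moreover have "H ?v = (1 / ?r) *\<^sub>R (H y - H x)"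
      using formal_conv_rep_scaleR_diff[OF rep x y] \<open>?v \<in> S \<inter> lp_ball p\<close> by blast
    ultimately have "norm ((1 / ?r) *\<^sub>R (H y - H x)) \<le> C" by (simp only:)
    then have "norm (H y - H x) / ?r \<le> C" using 2 by simp
    then show ?thesis using 2 by (simp add: divide_le_eq mult.commute)
  qed
qed

lemma p_continuous_if_bounded_on_lp_ball:
  assumes p: "1 \<le> p" and rep: "formal_conv_rep S H \<kappa>" and S: "S \<subseteq> {z. in_lp p z}"
    and C: "0 \<le> C" "\<forall>z\<in>S \<inter> lp_ball p. norm (H z) \<le> C"
    and normalized: "\<forall>x\<in>S. \<forall>y\<in>S. 0 < lp_norm p (\<lambda>n. y n - x n) \<longrightarrow>
      (\<lambda>n. (1 / lp_norm p (\<lambda>n. y n - x n)) *\<^sub>R (y n - x n)) \<in> S"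
  shows "p_continuous p S H"
proof -
  have "continuous_wrt (lp_norm p) S H"
  proof (rule continuous_wrt_if_Lipschitz[OF C(1)])
    fix x y assume "x \<in> S" "y \<in> S"
    then show "dist (H y) (H x) \<le> C * lp_norm p (\<lambda>n. y n - x n)"
      unfolding dist_norm by (rule lp_Lipschitz_if_bounded_on_lp_ball[OF p rep S C(2) normalized])
  qed
  then show ?thesis using S by (simp add: p_continuous_def)
qed

section \<open>Weighted continuity\<close>

lemma Holder_inequality_sum:
  fixes f g :: "'a \<Rightarrow> real"
  assumes "finite I" and P: "1 < P" "1 < q" "1/P + 1/q = 1"
    and f: "\<And>i. i \<in> I \<Longrightarrow> 0 \<le> f i" and g: "\<And>i. i \<in> I \<Longrightarrow> 0 \<le> g i"
  shows "(\<Sum>i\<in>I. f i * g i) \<le> (\<Sum>i\<in>I. f i powr P) powr (1/P) * (\<Sum>i\<in>I. g i powr q) powr (1/q)"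
proof -
  define \<alpha> where "\<alpha> = (\<Sum>i\<in>I. f i powr P) powr (1/P)"
  define \<beta> where "\<beta> = (\<Sum>i\<in>I. g i powr q) powr (1/q)"
  have \<alpha>P: "\<alpha> powr P = (\<Sum>i\<in>I. f i powr P)" and \<beta>q: "\<beta> powr q = (\<Sum>i\<in>I. g i powr q)"
    using P by (simp_all add: \<alpha>_def \<beta>_def powr_powr sum_nonneg)
  consider "\<alpha> = 0" | "\<beta> = 0" | "0 < \<alpha>" "0 < \<beta>" by (force simp: \<alpha>_def \<beta>_def)
  then show ?thesis
  proof cases
    case 1
    then have "\<forall>i\<in>I. f i powr P = 0" using \<alpha>P assms(1) by (simp add: sum_nonneg_eq_0_iff)
    then show ?thesis using 1 by (simp add: \<alpha>_def)
  next
    case 2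
    then have "\<forall>i\<in>I. g i powr q = 0" using \<beta>q assms(1) by (simp add: sum_nonneg_eq_0_iff)
    then show ?thesis using 2 by (simp add: \<beta>_def)
  next
    case 3
    have "(\<Sum>i\<in>I. (f i / \<alpha>) * (g i / \<beta>)) \<le> (\<Sum>i\<in>I. (f i / \<alpha>) powr P / P + (g i / \<beta>) powr q / q)"
      using f g 3 by (intro sum_mono Youngs_inequality[OF P]) auto
    also have "\<dots> = (\<Sum>i\<in>I. f i powr P) / \<alpha> powr P / P + (\<Sum>i\<in>I. g i powr q) / \<beta> powr q / q"
      using f g 3 by (simp add: powr_divide sum.distrib sum_divide_distrib)
    also have "\<dots> = 1/P + 1/q"
      using 3 by (simp add: \<alpha>P[symmetric] \<beta>q[symmetric])
    also have "\<dots> = 1" by (rule P(3))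
    finally have "(\<Sum>i\<in>I. f i * g i) / (\<alpha> * \<beta>) \<le> 1"
      by (simp add: sum_divide_distrib)
    then show ?thesis using 3 by (simp add: \<alpha>_def[symmetric] \<beta>_def[symmetric] divide_le_eq)
  qed
qed

lemma diff_div_sqrt_le:
  fixes s t :: real
  assumes "0 < t" and "t \<le> s"
  shows "(s - t) / sqrt s \<le> 2 * (sqrt s - sqrt t)"
proof -
  have "s - t = (sqrt s - sqrt t) * (sqrt s + sqrt t)"
    using assms by (simp add: algebra_simps)
  also have "\<dots> \<le> (sqrt s - sqrt t) * (2 * sqrt s)"
    using assms by (intro mult_left_mono) auto
  finally show ?thesis using assms by (simp add: divide_le_eq mult.commute mult.left_commute)
qed

lemma summable_div_sqrt_if_le_decrements:
  fixes a s :: "nat \<Rightarrow> real"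
  assumes s: "\<And>n. 0 < s n" "decseq s" "s \<longlonglongrightarrow> 0"
    and K: "0 \<le> K" and a: "\<And>n. 0 \<le> a n" "\<And>n. a n \<le> K * (s n - s (Suc n))"
  shows "summable (\<lambda>n. a n / sqrt (s n))"
proof (rule summable_comparison_test'[where N = 0])
  show "summable (\<lambda>n. 2 * K * (sqrt (s n) - sqrt (s (Suc n))))"
    using telescope_sums'[OF tendsto_real_sqrt[OF s(3)]] by (intro summable_mult) (auto simp: sums_iff)
  show "norm (a n / sqrt (s n)) \<le> 2 * K * (sqrt (s n) - sqrt (s (Suc n)))" for n
  proof -
    have "norm (a n / sqrt (s n)) \<le> K * (s n - s (Suc n)) / sqrt (s n)"
      using a s(1)[of n] by (simp add: divide_right_mono)
    also have "\<dots> = K * ((s n - s (Suc n)) / sqrt (s n))" by simp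
    also have "\<dots> \<le> K * (2 * (sqrt (s n) - sqrt (s (Suc n))))"
      using s K by (intro mult_left_mono diff_div_sqrt_le) (auto simp: decseq_Suc_iff)
    finally show ?thesis by (simp only: mult_ac)
  qed
qed

lemma weighting_seq_summable_div_sqrt:
  fixes a :: "nat \<Rightarrow> real"
  assumes a: "\<And>n. 0 \<le> a n" and sum: "summable a"
  shows "\<exists>s. weighting_seq s \<and> summable (\<lambda>n. a n / sqrt (s n))"
proof -
  define R where "R = suminf a"
  define r where "r n = R - (\<Sum>k<n. a k)" for n
  have R: "0 \<le> R" unfolding R_def by (rule suminf_nonneg[OF sum a])
  have r_nonneg: "0 \<le> r n" for n
    unfolding r_def R_def using sum_le_suminf[OF sum, of "{..<n}"] a by auto
  have r_le: "r n \<le> R" for n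
    unfolding r_def using sum_nonneg[of "{..<n}" a] a by auto
  have r_lim: "r \<longlonglongrightarrow> 0"
    using tendsto_diff[OF tendsto_const summable_LIMSEQ[OF sum], of R]
    by (simp add: r_def[abs_def] R_def)
  \<comment> \<open>The normalized tails of the series, kept positive by a geometric term: dividing by
    the square root of the tails is the classical way to slow down a convergent series.\<close>
  define s where "s n = (r n + (1/2)^n) / (R + 1)" for n
  have s_pos: "0 < s n" for n
    using r_nonneg[of n] R by (simp add: s_def add_nonneg_pos)
  have s_le_1: "s n \<le> 1" for n
    using r_le[of n] R power_le_one[of "1/2::real" n] by (simp add: s_def divide_le_eq)
  have decrement: "a n \<le> (R + 1) * (s n - s (Suc n))" for n
  proof -
    have scaled: "(R + 1) * s m = r m + (1/2)^m" for m
      using R by (simp add: s_def)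
    have "(R + 1) * (s n - s (Suc n)) = (r n - r (Suc n)) + ((1/2)^n - (1/2)^Suc n)"
      by (simp only: right_diff_distrib scaled)
    also have "\<dots> = a n + (1/2)^Suc n"
      by (simp add: r_def)
    finally show ?thesis by simp
  qed
  have s_dec: "decseq s"
  proof (rule decseq_SucI)
    fix n
    have "0 \<le> (R + 1) * (s n - s (Suc n))" using decrement[of n] a[of n] by linarith
    then show "s (Suc n) \<le> s n" using R by (simp add: zero_le_mult_iff)
  qed
  have "(\<lambda>n. (r n + (1/2)^n) / (R + 1)) \<longlonglongrightarrow> (0 + 0) / (R + 1)"
    by (intro tendsto_divide tendsto_add r_lim LIMSEQ_power_zero tendsto_const) (use R in auto)
  then have s_lim: "s \<longlonglongrightarrow> 0" by (simp add: s_def[abs_def])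
  have "weighting_seq s"
    unfolding weighting_seq_def using s_pos s_le_1 s_dec s_lim by blast
  moreover have "summable (\<lambda>n. a n / sqrt (s n))"
    using R by (intro summable_div_sqrt_if_le_decrements[OF s_pos s_dec s_lim _ a decrement]) auto
  ultimately show ?thesis by blast
qed

lemma weighting_seq_powr:
  assumes s: "weighting_seq s" and "0 < \<alpha>"
  shows "weighting_seq (\<lambda>n. s n powr \<alpha>)"
  unfolding weighting_seq_def
proof (intro conjI allI)
  have s_pos: "0 < s n" and s_le: "s n \<le> 1" for n using s by (auto simp: weighting_seq_def)
  show "0 < s n powr \<alpha>" and "s n powr \<alpha> \<le> 1" for n
    using s_pos[of n] s_le[of n] \<open>0 < \<alpha>\<close> by (auto intro: powr_le1)
  show "decseq (\<lambda>n. s n powr \<alpha>)"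
    unfolding decseq_def
  proof (intro allI impI)
    fix m n :: nat assume "m \<le> n"
    then have "s n \<le> s m" using s by (simp add: weighting_seq_def decseq_def)
    then show "s n powr \<alpha> \<le> s m powr \<alpha>"
      using s_pos[of n] \<open>0 < \<alpha>\<close> by (intro powr_mono2) auto
  qed
  show "(\<lambda>n. s n powr \<alpha>) \<longlonglongrightarrow> 0"
    using s s_pos \<open>0 < \<alpha>\<close>
    by (intro tendsto_zero_powrI) (auto simp: weighting_seq_def less_imp_le)
qed

lemma bdd_above_weighted_norms:
  assumes w: "weighting_seq w" and u: "in_lp \<infinity> u"
  shows "bdd_above (range (\<lambda>n. w n * norm (u n)))"
proof (rule bdd_aboveI2)
  fix n
  have "w n * norm (u n) \<le> 1 * norm (u n)"
    using w by (intro mult_right_mono) (auto simp: weighting_seq_def)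
  also have "\<dots> \<le> lp_norm \<infinity> u" using norm_le_lp_norm[OF _ u] by simp
  finally show "w n * norm (u n) \<le> lp_norm \<infinity> u" .
qed

lemma sum_le_weighted_norm_infinity:
  assumes w: "weighting_seq w" and u: "in_lp \<infinity> u" and b: "\<And>n. 0 \<le> b n"
    and K: "(\<Sum>n\<le>N. b n / w n) \<le> K"
  shows "(\<Sum>n\<le>N. b n * norm (u n)) \<le> K * weighted_norm \<infinity> w u"
proof -
  have w_pos: "0 < w n" for n using w by (simp add: weighting_seq_def)
  have bdd: "bdd_above (range (\<lambda>n. w n * norm (u n)))" by (rule bdd_above_weighted_norms[OF w u])
  have "b n * norm (u n) \<le> b n / w n * weighted_norm \<infinity> w u" for n
  proof -
    have "b n * norm (u n) = b n / w n * (w n * norm (u n))"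
      using w_pos[of n] by simp
    also have "\<dots> \<le> b n / w n * weighted_norm \<infinity> w u"
      using w_pos[of n] b[of n] bdd
      by (intro mult_left_mono) (auto simp: weighted_norm_def intro: cSUP_upper)
    finally show ?thesis .
  qed
  then have "(\<Sum>n\<le>N. b n * norm (u n)) \<le> (\<Sum>n\<le>N. b n / w n) * weighted_norm \<infinity> w u"
    by (simp add: sum_distrib_right sum_mono)
  also have "\<dots> \<le> K * weighted_norm \<infinity> w u"
    using K w_pos bdd
    by (intro mult_right_mono) (auto simp: weighted_norm_def less_imp_le intro: cSUP_upper2[of _ _ 0])
  finally show ?thesis .
qed

lemma sum_le_weighted_norm_ereal:
  assumes P: "1 < P" "1 < q" "1/P + 1/q = 1" and "weighting_seq w" and u: "in_lp (ereal P) u"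
    and b: "\<And>n. 0 \<le> b n" and K: "(\<Sum>n\<le>N. b n powr q * w n powr (- q / P)) \<le> K"
  shows "(\<Sum>n\<le>N. b n * norm (u n)) \<le> K powr (1/q) * weighted_norm (ereal P) w u"
proof -
  have w: "0 < w n" "w n \<le> 1" for n using \<open>weighting_seq w\<close> by (auto simp: weighting_seq_def)
  have sum: "summable (\<lambda>n. w n * norm (u n) powr P)"
  proof (rule summable_comparison_test'[where N = 0])
    show "summable (\<lambda>n. norm (u n) powr P)" using u by (simp add: in_lp_def)
    show "norm (w n * norm (u n) powr P) \<le> norm (u n) powr P" for n
      using w[of n] by (simp add: mult_left_le_one_le)
  qed
  have "(\<Sum>n\<le>N. b n * norm (u n))
      = (\<Sum>n\<le>N. (w n powr (1/P) * norm (u n)) * (b n * w n powr (- 1 / P)))"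
  proof (rule sum.cong)
    fix n
    have "w n powr (1/P) * w n powr (- 1 / P) = 1"
      using w(1)[of n] by (simp add: powr_add[symmetric])
    then show "b n * norm (u n) = (w n powr (1/P) * norm (u n)) * (b n * w n powr (- 1 / P))"
      by (metis mult.assoc mult.commute mult.right_neutral)
  qed simp
  also have "\<dots> \<le> (\<Sum>n\<le>N. (w n powr (1/P) * norm (u n)) powr P) powr (1/P)
      * (\<Sum>n\<le>N. (b n * w n powr (- 1 / P)) powr q) powr (1/q)"
    using b by (intro Holder_inequality_sum[OF _ P]) auto
  also have "(\<Sum>n\<le>N. (w n powr (1/P) * norm (u n)) powr P) = (\<Sum>n\<le>N. w n * norm (u n) powr P)"
    using w(1) P by (simp add: powr_mult powr_powr less_imp_le)
  also have "(\<Sum>n\<le>N. (b n * w n powr (- 1 / P)) powr q) = (\<Sum>n\<le>N. b n powr q * w n powr (- q / P))"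
    using b by (simp add: powr_mult powr_powr)
  also have "(\<Sum>n\<le>N. w n * norm (u n) powr P) powr (1/P) * (\<Sum>n\<le>N. b n powr q * w n powr (- q / P)) powr (1/q)
      \<le> weighted_norm (ereal P) w u * K powr (1/q)"
  proof (rule mult_mono)
    have "0 \<le> w n * norm (u n) powr P" for n using w(1)[of n] by simp
    then show "(\<Sum>n\<le>N. w n * norm (u n) powr P) powr (1/P) \<le> weighted_norm (ereal P) w u"
      unfolding weighted_norm_def using P by (auto intro!: powr_mono2 sum_le_suminf[OF sum] sum_nonneg)
    show "(\<Sum>n\<le>N. b n powr q * w n powr (- q / P)) powr (1/q) \<le> K powr (1/q)"
      using K P by (intro powr_mono2) (auto intro!: sum_nonneg)
  qed (simp_all add: weighted_norm_def)
  finally show ?thesis by (simp only: mult.commute)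
qed

lemma holder_conj_ereal:
  assumes "1 < P"
  shows "1 < holder_conj (ereal P)" and "1/P + 1/holder_conj (ereal P) = 1"
  using assms by (simp_all add: holder_conj_def field_simps)

lemma kernel_weighting_bound:
  fixes \<kappa> :: "nat \<Rightarrow> ('z::real_normed_vector \<Rightarrow>\<^sub>L 'y::real_normed_vector)"
  assumes p: "1 \<le> p" "p \<noteq> 1" and \<kappa>: "summable (\<lambda>n. norm (\<kappa> n) powr holder_conj p)"
  obtains w K where "weighting_seq w" "0 \<le> K"
    "\<And>(u :: nat \<Rightarrow> 'z) N. in_lp p u \<Longrightarrow> (\<Sum>n\<le>N. norm (\<kappa> n) * norm (u n)) \<le> K * weighted_norm p w u"
proof -
  let ?q = "holder_conj p"
  obtain s where s: "weighting_seq s" and s_sum: "summable (\<lambda>n. norm (\<kappa> n) powr ?q / sqrt (s n))"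
    using weighting_seq_summable_div_sqrt[OF _ \<kappa>] by auto
  have s_pos: "0 < s n" for n using s by (simp add: weighting_seq_def)
  have nonneg: "0 \<le> norm (\<kappa> n) powr ?q / sqrt (s n)" for n
    using s_pos[of n] by simp
  define A where "A = (\<Sum>n. norm (\<kappa> n) powr ?q / sqrt (s n))"
  have A: "(\<Sum>n\<le>N. norm (\<kappa> n) powr ?q / sqrt (s n)) \<le> A" for N
    unfolding A_def by (rule sum_le_suminf[OF s_sum]) (use nonneg in auto)
  have "0 \<le> A" unfolding A_def by (rule suminf_nonneg[OF s_sum nonneg])
  show ?thesis
    using p(1)
  proof (cases rule: ereal_ge_one_cases)
    case 1
    have w: "weighting_seq (\<lambda>n. sqrt (s n))"
      using weighting_seq_powr[OF s, of "1/2"] s_pos by (simp add: powr_half_sqrt less_imp_le)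
    show ?thesis
    proof (rule that[OF w \<open>0 \<le> A\<close>])
      fix u N assume "in_lp p u"
      then show "(\<Sum>n\<le>N. norm (\<kappa> n) * norm (u n)) \<le> A * weighted_norm p (\<lambda>n. sqrt (s n)) u"
        using A[of N] unfolding 1 by (intro sum_le_weighted_norm_infinity[OF w]) (auto simp: holder_conj_def)
    qed
  next
    case (2 P)
    then have P: "1 < P" using p(2) by (simp add: one_ereal_def)
    define q where "q = holder_conj p"
    have q: "1 < q" "1/P + 1/q = 1" using holder_conj_ereal[OF P] 2 by (simp_all add: q_def)
    \<comment> \<open>The exponent makes \<open>w^(-q/P) = 1 / sqrt s\<close>, the factor Hoelder's inequality puts on the kernel.\<close>
    define w where "w n = s n powr (P / (2 * q))" for n
    have w: "weighting_seq w"
      unfolding w_def[abs_def] using P q by (intro weighting_seq_powr[OF s]) auto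
    have w_q: "w n powr (- q / P) = 1 / sqrt (s n)" for n
      using s_pos[of n] q P by (simp add: w_def powr_powr powr_minus_divide powr_half_sqrt less_imp_le)
    have kernel_sum: "(\<Sum>n\<le>N. norm (\<kappa> n) powr q * w n powr (- q / P)) \<le> A" for N
      using A[of N] unfolding q_def[symmetric] by (simp only: w_q times_divide_eq_right mult_1_right)
    show ?thesis
    proof (rule that[OF w])
      show "0 \<le> A powr (1/q)" by simp
      fix u N assume "in_lp p u"
      then show "(\<Sum>n\<le>N. norm (\<kappa> n) * norm (u n)) \<le> A powr (1/q) * weighted_norm p w u"
        using kernel_sum[of N] unfolding 2 by (intro sum_le_weighted_norm_ereal[OF P q w]) auto
    qed
  qed
qed

lemma p_weighted_FMP_if_summable_kernel:
  fixes \<kappa> :: "nat \<Rightarrow> ('z::real_normed_vector \<Rightarrow>\<^sub>L 'y::real_normed_vector)"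
  assumes p: "1 \<le> p" "p \<noteq> 1" and S: "S \<subseteq> {z. in_lp p z}" and rep: "formal_conv_rep S H \<kappa>"
    and \<kappa>: "summable (\<lambda>n. norm (\<kappa> n) powr holder_conj p)"
  shows "p_weighted_FMP p S H"
proof -
  obtain w K where w: "weighting_seq w" and K: "0 \<le> K"
    and bound: "\<And>(u :: nat \<Rightarrow> 'z) N. in_lp p u \<Longrightarrow> (\<Sum>n\<le>N. norm (\<kappa> n) * norm (u n)) \<le> K * weighted_norm p w u"
    using kernel_weighting_bound[OF p \<kappa>] by blast
  have "continuous_wrt (weighted_norm p w) S H"
  proof (rule continuous_wrt_if_Lipschitz[OF K])
    fix x y assume x: "x \<in> S" and y: "y \<in> S"
    then have "in_lp p (\<lambda>n. y n - x n)" using in_lp_diff[OF p(1)] S by auto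
    then show "dist (H y) (H x) \<le> K * weighted_norm p w (\<lambda>n. y n - x n)"
      unfolding dist_norm by (intro formal_conv_rep_norm_diff_le[OF rep x y] bound)
  qed
  then show ?thesis using S w by (auto simp: p_weighted_FMP_def)
qed

theorem lemma3p1:
  fixes p :: ereal
    and S :: "(nat \<Rightarrow> 'z::real_normed_vector) set"
    and H :: "(nat \<Rightarrow> 'z) \<Rightarrow> 'y::real_normed_vector"
    and \<kappa> :: "nat \<Rightarrow> ('z \<Rightarrow>\<^sub>L 'y)"
  assumes p: "1 \<le> p"
    and adm: "admissible_inputs S"
    and dom: "(lp_ball p \<subseteq> S \<and> S \<subseteq> {z. in_lp p z}) \<or>
              (c0_seq \<inter> lp_ball p \<subseteq> S \<and> S \<subseteq> c0_seq \<inter> {z. in_lp p z})"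
    and lin: "linear_functional S H"
    and rep: "formal_conv_rep S H \<kappa>"
  shows "p_continuous p S H \<and>
         (p \<noteq> 1 \<and> summable (\<lambda>n. norm (\<kappa> n) powr holder_conj p) \<longrightarrow> p_weighted_FMP p S H)"
proof -
  \<comment> \<open>The representation alone makes H linear along the differences that matter.\<close>
  have ball: "c0_seq \<inter> lp_ball p \<subseteq> S" and S: "S \<subseteq> {z. in_lp p z}" using dom by auto
  have normalized: "\<forall>x\<in>S. \<forall>y\<in>S. 0 < lp_norm p (\<lambda>n. y n - x n) \<longrightarrow>
      (\<lambda>n. (1 / lp_norm p (\<lambda>n. y n - x n)) *\<^sub>R (y n - x n)) \<in> S"
  proof (intro ballI impI)
    fix x y assume x: "x \<in> S" and y: "y \<in> S" and r: "0 < lp_norm p (\<lambda>n. y n - x n)"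
    have "in_lp p (\<lambda>n. y n - x n)" using in_lp_diff[OF p] x y S by auto
    with dom x y show "(\<lambda>n. (1 / lp_norm p (\<lambda>n. y n - x n)) *\<^sub>R (y n - x n)) \<in> S"
      using normalized_in_lp_ball[OF p _ r] c0_seq_scaleR_diff by blast
  qed
  obtain C where "0 \<le> C" and "\<forall>z\<in>S \<inter> lp_ball p. norm (H z) \<le> C"
    using formal_conv_rep_bounded_on_lp_ball[OF p ball rep] by blast
  then have "p_continuous p S H"
    by (rule p_continuous_if_bounded_on_lp_ball[OF p rep S _ _ normalized])
  moreover have "p \<noteq> 1 \<and> summable (\<lambda>n. norm (\<kappa> n) powr holder_conj p) \<longrightarrow> p_weighted_FMP p S H"
    using p_weighted_FMP_if_summable_kernel[OF p _ S rep] by blast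
  ultimately show ?thesis by blast
qed

end
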